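(* Let $G$ be a bipartite graph with bipartition $(X,Y)$, $|X| = n\geq 2$, $|Y|=m$, every $x\in X$ having degree at least $\delta$, and let $(C,x)$ be a tight pair in $G$. If $n\leq\delta$ and $Y\cap V(C)\subseteq N(x)$, then for each $w \in X\cap V(C)$ and each $y\in N(w)\setminus V(C)$, the vertex $w$ separates $y$ from $V(C)\setminus\{w\}$ in $G$ (i.e., every path in $G$ from $y$ to $V(C)\setminus\{w\}$ passes through $w$).
   Context: A tight pair in $G$ is a pair $(C,x)$ where $C$ is a longest cycle in $G$ and $x \in X \setminus V(C)$, chosen such that $|N(x)\cap V(C)|$ is maximum over all pairs $(C',x')$ with $C'$ a longest cycle in $G$ and $x' \in X\setminus V(C')$. *)

theory Defs
  imports Main
begin

definition bipartite_graph :: "'a set \<Rightarrow> 'a set \<Rightarrow> ('a \<Rightarrow> 'a \<Rightarrow> bool) \<Rightarrow> bool" where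
  "bipartite_graph X Y E \<longleftrightarrow> finite X \<and> finite Y \<and> X \<inter> Y = {} \<and>
     (\<forall>u v. E u v \<longrightarrow> E v u) \<and>
     (\<forall>u v. E u v \<longrightarrow> (u \<in> X \<and> v \<in> Y) \<or> (u \<in> Y \<and> v \<in> X))"

definition nbhd :: "('a \<Rightarrow> 'a \<Rightarrow> bool) \<Rightarrow> 'a \<Rightarrow> 'a set" where
  "nbhd E v = {u. E v u}"

definition is_path :: "('a \<Rightarrow> 'a \<Rightarrow> bool) \<Rightarrow> 'a list \<Rightarrow> bool" where
  "is_path E p \<longleftrightarrow> p \<noteq> [] \<and> distinct p \<and> (\<forall>i. Suc i < length p \<longrightarrow> E (p ! i) (p ! Suc i))"

definition is_cycle :: "('a \<Rightarrow> 'a \<Rightarrow> bool) \<Rightarrow> 'a list \<Rightarrow> bool" where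
  "is_cycle E C \<longleftrightarrow> length C \<ge> 3 \<and> is_path E C \<and> E (last C) (hd C)"

definition longest_cycle :: "('a \<Rightarrow> 'a \<Rightarrow> bool) \<Rightarrow> 'a list \<Rightarrow> bool" where
  "longest_cycle E C \<longleftrightarrow> is_cycle E C \<and> (\<forall>C'. is_cycle E C' \<longrightarrow> length C' \<le> length C)"

definition tight_pair :: "'a set \<Rightarrow> ('a \<Rightarrow> 'a \<Rightarrow> bool) \<Rightarrow> 'a list \<Rightarrow> 'a \<Rightarrow> bool" where
  "tight_pair X E C x \<longleftrightarrow> longest_cycle E C \<and> x \<in> X - set C \<and>
     (\<forall>C' x'. longest_cycle E C' \<and> x' \<in> X - set C' \<longrightarrow>
        card (nbhd E x' \<inter> set C') \<le> card (nbhd E x \<inter> set C))"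

definition separates :: "('a \<Rightarrow> 'a \<Rightarrow> bool) \<Rightarrow> 'a \<Rightarrow> 'a \<Rightarrow> 'a set \<Rightarrow> bool" where
  "separates E w y S \<longleftrightarrow> (\<forall>p. is_path E p \<and> hd p = y \<and> last p \<in> S \<longrightarrow> w \<in> set p)"

end

theory Submission
  imports Defs
begin

text \<open>Suppose a path from y avoids w and reaches V(C) \<union> {x} first at some z \<noteq> w.
  Its initial segment Q is a detour from w that could be spliced into C, giving a longer
  cycle: if z = x, close up via the edge from x to the Y-vertex following w; otherwise
  run from z backwards along C to the vertex after w, jump through x (which sees every
  Y-vertex of C) to the first Y-vertex beyond z, and continue along C back to w. This
  skips at most one vertex of C while adding all of Q.\<close>

lemma is_path_iff: "is_path E p \<longleftrightarrow> p \<noteq> [] \<and> distinct p \<and> successively E p"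
  by (simp add: is_path_def successively_conv_nth)

lemma is_cycle_Cons_iff:
  "is_cycle E (w # D) \<longleftrightarrow>
     2 \<le> length D \<and> w \<notin> set D \<and> distinct D \<and> successively E D \<and> E w (hd D) \<and> E (last D) w"
  by (cases D) (auto simp: is_cycle_def is_path_iff successively_Cons)

lemma bipartite_graph_sym: "bipartite_graph X Y E \<Longrightarrow> E u v \<Longrightarrow> E v u"
  by (simp add: bipartite_graph_def)

lemma bipartite_graph_adj_X: "bipartite_graph X Y E \<Longrightarrow> E u v \<Longrightarrow> u \<in> X \<Longrightarrow> v \<in> Y"
  unfolding bipartite_graph_def by blast

lemma bipartite_graph_adj_Y: "bipartite_graph X Y E \<Longrightarrow> E u v \<Longrightarrow> u \<in> Y \<Longrightarrow> v \<in> X"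
  unfolding bipartite_graph_def by blast

lemma successively_rev_sym:
  "\<forall>u v. E u v \<longrightarrow> E v u \<Longrightarrow> successively E (rev xs) \<longleftrightarrow> successively E xs"
proof -
  assume "\<forall>u v. E u v \<longrightarrow> E v u"
  then have "successively (\<lambda>u v. E v u) xs \<longleftrightarrow> successively E xs"
    by (intro successively_cong) auto
  then show ?thesis by simp
qed

lemma is_cycle_append_swap: "is_cycle E (A @ B) \<Longrightarrow> is_cycle E (B @ A)"
  by (cases "A = []"; cases "B = []")
    (auto simp: is_cycle_def is_path_iff successively_append_iff)

lemma is_cycle_rotate:
  assumes "is_cycle E C" and "w \<in> set C"
  obtains D where "is_cycle E (w # D)" "set (w # D) = set C" "length (w # D) = length C"
proof -
  obtain A B where C: "C = A @ w # B" using \<open>w \<in> set C\<close> by (meson split_list)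
  have "is_cycle E (w # B @ A)"
    using is_cycle_append_swap[of E A "w # B"] assms(1) unfolding C by simp
  with that[of "B @ A"] show ?thesis unfolding C by auto
qed

lemma is_cycle_Cons_rev:
  assumes "\<forall>u v. E u v \<longrightarrow> E v u" and "is_cycle E (w # D)"
  shows "is_cycle E (w # rev D)"
  using assms successively_rev_sym[OF assms(1)]
  by (auto simp: is_cycle_Cons_iff hd_rev last_rev simp del: successively_rev)

lemma is_cycle_reroute:
  assumes sym: "\<forall>u v. E u v \<longrightarrow> E v u"
    and cyc: "is_cycle E (w # P @ z # R @ S)"
    and Q: "is_path E Q" "set Q \<inter> insert x (set (w # P @ z # R @ S)) = {}"
    and x: "x \<notin> set (w # P @ z # R @ S)"
    and edges: "E w (hd Q)" "E (last Q) z" "E (last (z # rev P)) x" "E x (hd S)"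
    and "S \<noteq> []"
  shows "is_cycle E (w # Q @ z # rev P @ x # S)"
proof -
  have "successively E P" "successively E S" "P \<noteq> [] \<Longrightarrow> E (last P) z" "E (last S) w"
    using cyc \<open>S \<noteq> []\<close>
    by (auto simp: is_cycle_Cons_iff successively_append_iff successively_Cons)
  then have "successively E (z # rev P)"
    using sym by (auto simp: successively_Cons successively_rev_sym hd_rev simp del: successively_rev)
  then have "successively E (Q @ (z # rev P) @ x # S)"
    using Q edges \<open>successively E S\<close> \<open>S \<noteq> []\<close>
    by (cases "P = []") (auto simp: is_path_iff successively_append_iff successively_Cons)
  then show ?thesis
    using cyc Q x edges \<open>E (last S) w\<close> \<open>S \<noteq> []\<close>
    by (auto simp: is_cycle_Cons_iff is_path_iff)
qed

lemma longer_cycle_via_inner_detour: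
  assumes G: "bipartite_graph X Y E"
    and cyc: "is_cycle E (w # D)" and "w \<in> X"
    and x: "x \<in> X" "x \<notin> set (w # D)" "\<forall>v \<in> Y \<inter> set D. E x v"
    and Q: "is_path E Q" "set Q \<inter> insert x (set (w # D)) = {}" "E w (hd Q)"
    and z: "z \<in> set D" "z \<noteq> last D" "E (last Q) z"
  shows "\<exists>C'. is_cycle E C' \<and> length (w # D) < length C'"
proof -
  have sym: "\<forall>u v. E u v \<longrightarrow> E v u" using G bipartite_graph_sym by metis
  have XY: "X \<inter> Y = {}" using G by (simp add: bipartite_graph_def)
  obtain P S where D: "D = P @ z # S" using split_list[OF z(1)] by blast
  with z(2) obtain s S' where S: "S = s # S'" by (cases S) auto
  have "successively E D" "E w (hd D)" "E (last D) w"
    using cyc by (auto simp: is_cycle_Cons_iff)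
  then have "E z s" and s_next: "S' \<noteq> [] \<Longrightarrow> E s (hd S')"
    by (auto simp: D S successively_append_iff successively_Cons)
  have "hd D \<in> Y" using G \<open>E w (hd D)\<close> \<open>w \<in> X\<close> by (rule bipartite_graph_adj_X)
  have "last D \<in> Y"
    using G bipartite_graph_sym[OF G \<open>E (last D) w\<close>] \<open>w \<in> X\<close> by (rule bipartite_graph_adj_X)
  have "Q \<noteq> []" using Q(1) by (simp add: is_path_iff)
  have "z \<in> X \<or> z \<in> Y" using G z(3) unfolding bipartite_graph_def by blast
  then show ?thesis
  proof
    assume "z \<in> X"
    have "P \<noteq> []"
    proof
      assume "P = []"
      then have "hd D = z" by (simp add: D)
      with \<open>z \<in> X\<close> \<open>hd D \<in> Y\<close> XY show False by blast
    qed
    have "s \<in> Y" using G \<open>E z s\<close> \<open>z \<in> X\<close> by (rule bipartite_graph_adj_X)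
    have "last (z # rev P) = hd D" using \<open>P \<noteq> []\<close> by (simp add: D last_rev)
    then have "E (last (z # rev P)) x" "E x (hd S)"
      using x(3) sym \<open>hd D \<in> Y\<close> \<open>s \<in> Y\<close> \<open>P \<noteq> []\<close> by (auto simp: D S)
    then have "is_cycle E (w # Q @ z # rev P @ x # S)"
      using is_cycle_reroute[OF sym, of w P z "[]" S Q x] cyc Q x(2) z(3)
      by (simp add: D S)
    then show ?thesis using \<open>Q \<noteq> []\<close> by (intro exI[of _ "w # Q @ z # rev P @ x # S"]) (simp add: D)
  next
    assume "z \<in> Y"
    have "s \<in> X" using G \<open>E z s\<close> \<open>z \<in> Y\<close> by (rule bipartite_graph_adj_Y)
    have "S' \<noteq> []"
    proof
      assume "S' = []"
      then have "last D = s" by (simp add: D S)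
      with \<open>s \<in> X\<close> \<open>last D \<in> Y\<close> XY show False by blast
    qed
    have "hd S' \<in> Y"
      using G s_next[OF \<open>S' \<noteq> []\<close>] \<open>s \<in> X\<close> by (rule bipartite_graph_adj_X)
    have "last (z # rev P) \<in> Y \<inter> set D"
      using \<open>z \<in> Y\<close> \<open>hd D \<in> Y\<close> by (cases P) (simp_all add: D last_rev)
    then have "E (last (z # rev P)) x" "E x (hd S')"
      using x(3) sym \<open>hd S' \<in> Y\<close> \<open>S' \<noteq> []\<close> by (auto simp: D S)
    then have "is_cycle E (w # Q @ z # rev P @ x # S')"
      using is_cycle_reroute[OF sym, of w P z "[s]" S' Q x] cyc Q x(2) z(3) \<open>S' \<noteq> []\<close>
      by (simp add: D S)
    then show ?thesis using \<open>Q \<noteq> []\<close> by (intro exI[of _ "w # Q @ z # rev P @ x # S'"]) (simp add: D S)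
  qed
qed

lemma longer_cycle_via_detour:
  assumes G: "bipartite_graph X Y E"
    and cyc: "is_cycle E (w # D)" and "w \<in> X"
    and x: "x \<in> X" "x \<notin> set (w # D)" "\<forall>v \<in> Y \<inter> set D. E x v"
    and Q: "is_path E Q" "set Q \<inter> insert x (set (w # D)) = {}" "E w (hd Q)"
    and z: "z \<in> insert x (set D)" "E (last Q) z"
  shows "\<exists>C'. is_cycle E C' \<and> length (w # D) < length C'"
proof -
  have sym: "\<forall>u v. E u v \<longrightarrow> E v u" using G bipartite_graph_sym by metis
  consider "z = x" | "z \<in> set D" "z \<noteq> last D" | "z = last D" using z(1) by blast
  then show ?thesis
  proof cases
    case 1
    have "E w (hd D)" "D \<noteq> []" using cyc by (auto simp: is_cycle_Cons_iff)
    then have "hd D \<in> Y \<inter> set D"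
      using G \<open>w \<in> X\<close> bipartite_graph_adj_X by auto
    then have "is_cycle E (w # Q @ x # D)"
      using cyc Q x z(2) 1 by (auto simp: is_cycle_Cons_iff is_path_iff successively_append_iff successively_Cons)
    then show ?thesis using Q(1) by (intro exI[of _ "w # Q @ x # D"]) (simp add: is_path_iff)
  next
    case 2
    then show ?thesis using longer_cycle_via_inner_detour[OF G cyc] assms by blast
  next
    case 3
    have "2 \<le> length D" "distinct D" using cyc by (auto simp: is_cycle_Cons_iff)
    then have "z \<noteq> last (rev D)"
      using 3 by (cases D rule: rev_cases) (auto simp: last_rev)
    moreover have "z \<in> set (rev D)" using 3 \<open>2 \<le> length D\<close> by (auto intro: last_in_set)
    ultimately show ?thesis
      using longer_cycle_via_inner_detour[OF G is_cycle_Cons_rev[OF sym cyc]] assms by auto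
  qed
qed

theorem lemma3:
  fixes X Y :: "'a set" and E :: "'a \<Rightarrow> 'a \<Rightarrow> bool" and n m \<delta> :: nat
    and C :: "'a list" and x :: 'a
  assumes "bipartite_graph X Y E"
    and "card X = n" and "n \<ge> 2" and "card Y = m"
    and "\<forall>v\<in>X. card (nbhd E v) \<ge> \<delta>"
    and "tight_pair X E C x"
    and "n \<le> \<delta>"
    and "Y \<inter> set C \<subseteq> nbhd E x"
  shows "\<forall>w\<in>X \<inter> set C. \<forall>y\<in>nbhd E w - set C. separates E w y (set C - {w})"
  \<comment> \<open>Only the maximality of C and the adjacency of x to Y \<inter> V(C) are needed.\<close>
proof (intro ballI)
  fix w y assume w: "w \<in> X \<inter> set C" and y: "y \<in> nbhd E w - set C"
  note G = assms(1)
  have cyc: "is_cycle E C" and longest: "\<And>C'. is_cycle E C' \<Longrightarrow> length C' \<le> length C"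
    and x: "x \<in> X" "x \<notin> set C" and x_adj: "\<forall>v \<in> Y \<inter> set C. E x v"
    using assms(6,8) by (auto simp: tight_pair_def longest_cycle_def nbhd_def)
  obtain D where D: "is_cycle E (w # D)" "set (w # D) = set C" "length (w # D) = length C"
    using is_cycle_rotate[OF cyc] w by blast
  have "E w y" using y by (simp add: nbhd_def)
  then have "y \<in> Y" using G w by (blast intro: bipartite_graph_adj_X)
  then have "y \<notin> insert x (set C)"
    using G x y by (auto simp: bipartite_graph_def)
  show "separates E w y (set C - {w})"
    unfolding separates_def
  proof (intro allI impI)
    fix p assume p: "is_path E p \<and> hd p = y \<and> last p \<in> set C - {w}"
    show "w \<in> set p"
    proof (rule ccontr)
      assume "w \<notin> set p"
      have "\<exists>v \<in> set p. v \<in> insert x (set C)"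
        using p by (auto simp: is_path_iff)
      then obtain Q z R where p_split: "p = Q @ z # R" and z: "z \<in> insert x (set C)"
        and Q_out: "\<forall>v \<in> set Q. v \<notin> insert x (set C)"
        using split_list_first_prop[of p "\<lambda>v. v \<in> insert x (set C)"] by blast
      have "Q \<noteq> []" using p p_split z \<open>y \<notin> insert x (set C)\<close> by (cases Q) auto
      then have "is_path E Q" "E (last Q) z" "E w (hd Q)"
        using p p_split \<open>E w y\<close> by (auto simp: is_path_iff successively_append_iff)
      moreover have "z \<in> insert x (set D)" using z D(2) \<open>w \<notin> set p\<close> p_split by auto
      ultimately obtain C' where "is_cycle E C'" "length (w # D) < length C'"
        using longer_cycle_via_detour[OF G D(1), of x Q z] w x x_adj Q_out D(2) by auto
      with longest D(3) show False by fastforce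
    qed
  qed
qed

end
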